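(* Let $K$ be a field, $R=K[x_1,\dots,x_n]$, $\boldsymbol{\lambda}=(\lambda_1,\dots,\lambda_n)$ a vector of positive integers, $L=\mathrm{lcm}(\lambda_1,\dots,\lambda_n)$, $\omega_i=L/\lambda_i$, $\boldsymbol{\omega}=(\omega_1,\dots,\omega_n)$, and $\Gamma=\{\boldsymbol{\alpha}\in\mathbb{N}^n\mid \boldsymbol{\omega}\cdot\boldsymbol{\alpha}\ge L\}$. The following are equivalent: (a) $I(\boldsymbol{\lambda})$ is normal; (b) whenever $\boldsymbol{\alpha}\in\mathbb{N}^n$ and $p$ is a positive integer with $\boldsymbol{\omega}\cdot\boldsymbol{\alpha}\ge pL$, there exist $\boldsymbol{\beta}_1,\dots,\boldsymbol{\beta}_p\in\Gamma$ with $\boldsymbol{\alpha}=\sum_{j=1}^p\boldsymbol{\beta}_j$; (c) whenever $\boldsymbol{\alpha}=(a_1,\dots,a_n)\in\mathbb{N}^n$ with $a_i<\lambda_i$ for all $i$ and $p$ is an integer with $1\le p<n$ and $\boldsymbol{\omega}\cdot\boldsymbol{\alpha}\ge pL$, there exist $\boldsymbol{\beta}_1,\dots,\boldsymbol{\beta}_p\in\Gamma$ with $\boldsymbol{\alpha}=\sum_{j=1}^p\boldsymbol{\beta}_j$.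
   Context: $J(\boldsymbol{\lambda})=(x_1^{\lambda_1},\dots,x_n^{\lambda_n})$ and $I(\boldsymbol{\lambda})=\overline{J(\boldsymbol{\lambda})}$ is its integral closure in $R$; the set $\Gamma$ is exactly the set of exponent vectors of monomials in $I(\boldsymbol{\lambda})$. An ideal is normal if all its positive powers are integrally closed. *)

theory Defs
  imports "HOL-Library.Poly_Mapping"
begin

text \<open>Polynomial ring K[x_v | v in 'v] over a field K, with 'v a finite type of
  variables (n = CARD('v)); polynomials are finitely supported maps from
  monomials (exponent vectors 'v =>0 nat) to coefficients.\<close>

type_synonym ('v, 'k) mpoly = "('v \<Rightarrow>\<^sub>0 nat) \<Rightarrow>\<^sub>0 'k"

definition gen_ideal :: "'a::comm_ring_1 set \<Rightarrow> 'a set" where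
  "gen_ideal G = {x. \<exists>F r. finite F \<and> F \<subseteq> G \<and> x = (\<Sum>g\<in>F. r g * g)}"

definition ideal_prod :: "'a::comm_ring_1 set \<Rightarrow> 'a set \<Rightarrow> 'a set" where
  "ideal_prod I J = gen_ideal {a * b | a b. a \<in> I \<and> b \<in> J}"

fun ideal_pow :: "'a::comm_ring_1 set \<Rightarrow> nat \<Rightarrow> 'a set" where
  "ideal_pow I 0 = UNIV"
| "ideal_pow I (Suc k) = ideal_prod I (ideal_pow I k)"

definition int_closure :: "'a::comm_ring_1 set \<Rightarrow> 'a set" where
  "int_closure I = {f. \<exists>k a. k \<ge> 1 \<and> (\<forall>i\<in>{1..k}. a i \<in> ideal_pow I i) \<and>
       f ^ k + (\<Sum>i=1..k. a i * f ^ (k - i)) = 0}"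

definition normal_ideal :: "'a::comm_ring_1 set \<Rightarrow> bool" where
  "normal_ideal I \<longleftrightarrow> (\<forall>m\<ge>1. int_closure (ideal_pow I m) = ideal_pow I m)"

definition var_pow :: "'v \<Rightarrow> nat \<Rightarrow> ('v, 'k::comm_ring_1) mpoly" where
  "var_pow v e = Poly_Mapping.single (Poly_Mapping.single v e) 1"

definition J_lam :: "('v::finite \<Rightarrow> nat) \<Rightarrow> ('v, 'k::field) mpoly set" where
  "J_lam lam = gen_ideal (range (\<lambda>v. var_pow v (lam v)))"

definition I_lam :: "('v::finite \<Rightarrow> nat) \<Rightarrow> ('v, 'k::field) mpoly set" where
  "I_lam lam = int_closure (J_lam lam)"

definition lcm_lam :: "('v::finite \<Rightarrow> nat) \<Rightarrow> nat" where
  "lcm_lam lam = Lcm (range lam)"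

definition omega :: "('v::finite \<Rightarrow> nat) \<Rightarrow> 'v \<Rightarrow> nat" where
  "omega lam v = lcm_lam lam div lam v"

definition dotw :: "('v::finite \<Rightarrow> nat) \<Rightarrow> ('v \<Rightarrow> nat) \<Rightarrow> nat" where
  "dotw w a = (\<Sum>v\<in>UNIV. w v * a v)"

definition Gamma :: "('v::finite \<Rightarrow> nat) \<Rightarrow> ('v \<Rightarrow> nat) set" where
  "Gamma lam = {a. dotw (omega lam) a \<ge> lcm_lam lam}"

definition decomposable :: "('v::finite \<Rightarrow> nat) \<Rightarrow> ('v \<Rightarrow> nat) \<Rightarrow> nat \<Rightarrow> bool" where
  "decomposable lam a p \<longleftrightarrow>
     (\<exists>\<beta> :: nat \<Rightarrow> 'v \<Rightarrow> nat. (\<forall>j<p. \<beta> j \<in> Gamma lam) \<and> a = (\<lambda>v. \<Sum>j<p. \<beta> j v))"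

end

theory Submission
  imports Defs
begin

text \<open>Let \<open>L = lcm \<lambda>\<close>, and call \<open>\<omega> \<cdot> \<alpha>\<close> the weighted degree of \<open>x^\<alpha>\<close>. The weighted order of a
  polynomial (the least weighted degree of its monomials) is a valuation, because lowest terms
  multiply once ties are broken by a monomial order refining the weight. Hence an ideal spanned by
  the monomials of weighted degree \<open>\<ge> c\<close> is integrally closed; it contains \<open>I(\<lambda>)\<close> for \<open>c = L\<close>,
  since it contains \<open>J(\<lambda>)\<close>, and the integral closure of \<open>I(\<lambda>)^p\<close> for \<open>c = pL\<close>. Conversely \<open>(x^\<alpha>)^L = x^(L\<alpha>)\<close> is divisible by
  \<open>\<omega> \<cdot> \<alpha>\<close> pure powers \<open>x_v^\<lambda>_v\<close>, so \<open>x^\<beta> \<in> I(\<lambda>)\<close> for \<open>\<beta> \<in> \<Gamma>\<close>, and \<open>x^\<alpha>\<close> is integral over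
  \<open>I(\<lambda>)^p\<close> when \<open>\<omega> \<cdot> \<alpha> \<ge> pL\<close>. As the monomials of \<open>I(\<lambda>)^p\<close> are those whose exponent is a sum
  of \<open>p\<close> elements of \<open>\<Gamma>\<close>, normality is equivalent to (b). For (c) \<open>\<Longrightarrow>\<close> (b), split off pure
  powers \<open>\<lambda>_v e_v \<in> \<Gamma>\<close> while some \<open>a_v \<ge> \<lambda>_v\<close>; once none is left, \<open>\<omega> \<cdot> a < nL\<close> forces
  \<open>p < n\<close>, where (c) applies.\<close>

section \<open>Generated ideals, their powers and integral closure\<close>

lemma gen_ideal_base: "g \<in> G \<Longrightarrow> g \<in> gen_ideal G"
  unfolding gen_ideal_def by (intro CollectI exI[of _ "{g}"] exI[of _ "\<lambda>_. 1"]) auto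

lemma zero_in_gen_ideal: "0 \<in> gen_ideal G"
  unfolding gen_ideal_def by (intro CollectI exI[of _ "{}"]) auto

lemma gen_ideal_add:
  assumes "x \<in> gen_ideal G" "y \<in> gen_ideal G"
  shows "x + y \<in> gen_ideal G"
proof -
  from assms obtain F1 r1 F2 r2 where
    F1: "finite F1" "F1 \<subseteq> G" "x = (\<Sum>g\<in>F1. r1 g * g)" and
    F2: "finite F2" "F2 \<subseteq> G" "y = (\<Sum>g\<in>F2. r2 g * g)"
    unfolding gen_ideal_def by blast
  have fin: "finite (F1 \<union> F2)" using F1 F2 by simp
  have extend: "(\<Sum>g\<in>F1 \<union> F2. (if g \<in> F then r g else 0) * g) = (\<Sum>g\<in>F. r g * g)"
    if "F \<subseteq> F1 \<union> F2" for F r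
  proof -
    have "(\<Sum>g\<in>F1 \<union> F2. (if g \<in> F then r g else 0) * g) = (\<Sum>g\<in>F1 \<union> F2. if g \<in> F then r g * g else 0)"
      by (rule sum.cong) auto
    also have "\<dots> = (\<Sum>g\<in>(F1 \<union> F2) \<inter> F. r g * g)"
      by (rule sum.inter_restrict[OF fin, symmetric])
    also have "(F1 \<union> F2) \<inter> F = F"
      using that by blast
    finally show ?thesis .
  qed
  define r where "r g = (if g \<in> F1 then r1 g else 0) + (if g \<in> F2 then r2 g else 0)" for g
  have "(\<Sum>g\<in>F1 \<union> F2. r g * g)
      = (\<Sum>g\<in>F1 \<union> F2. (if g \<in> F1 then r1 g else 0) * g) + (\<Sum>g\<in>F1 \<union> F2. (if g \<in> F2 then r2 g else 0) * g)"
    unfolding r_def distrib_right by (rule sum.distrib)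
  also have "\<dots> = x + y"
    using extend[of F1 r1] extend[of F2 r2] F1(3) F2(3) by simp
  finally show ?thesis
    unfolding gen_ideal_def using F1 F2 fin by (intro CollectI exI[of _ "F1 \<union> F2"] exI[of _ r]) auto
qed

lemma gen_ideal_mult_left: "x \<in> gen_ideal G \<Longrightarrow> r * x \<in> gen_ideal G"
  unfolding gen_ideal_def by (auto simp: sum_distrib_left mult.assoc intro!: exI[of _ "\<lambda>g. r * _ g"])

lemma ideal_pow_add: "x \<in> ideal_pow A k \<Longrightarrow> y \<in> ideal_pow A k \<Longrightarrow> x + y \<in> ideal_pow A k"
  by (cases k) (auto simp: ideal_prod_def intro: gen_ideal_add)

lemma ideal_pow_mult_left: "x \<in> ideal_pow A k \<Longrightarrow> r * x \<in> ideal_pow A k"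
  by (cases k) (auto simp: ideal_prod_def intro: gen_ideal_mult_left)

lemma zero_in_ideal_pow: "0 \<in> ideal_pow A k"
  by (cases k) (auto simp: ideal_prod_def intro: zero_in_gen_ideal)

lemma ideal_pow_sum:
  "finite S \<Longrightarrow> (\<And>s. s \<in> S \<Longrightarrow> h s \<in> ideal_pow A k) \<Longrightarrow> sum h S \<in> ideal_pow A k"
  by (induction S rule: finite_induct) (auto intro: zero_in_ideal_pow ideal_pow_add)

lemma mult_in_ideal_pow_Suc: "a \<in> A \<Longrightarrow> b \<in> ideal_pow A k \<Longrightarrow> a * b \<in> ideal_pow A (Suc k)"
  unfolding ideal_pow.simps ideal_prod_def by (rule gen_ideal_base) blast

lemma in_int_closure_if_power_in_ideal_pow:
  assumes "k \<ge> 1" and "y ^ k \<in> ideal_pow A k"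
  shows "y \<in> int_closure A"
proof -
  define a where "a i = (if i = k then - (y ^ k) else 0)" for i
  have "a i \<in> ideal_pow A i" for i
    using ideal_pow_mult_left[OF assms(2), of "-1"] by (simp add: a_def zero_in_ideal_pow)
  moreover have "(\<Sum>i=1..k. a i * y ^ (k - i)) = - (y ^ k)"
    using assms(1) by (simp add: a_def if_distrib[of "\<lambda>c. c * _"] cong: if_cong)
  ultimately show ?thesis
    unfolding int_closure_def using assms(1) by (intro CollectI exI[of _ k] exI[of _ a]) auto
qed

lemma subset_int_closure: "A \<subseteq> int_closure A"
proof
  fix f assume "f \<in> A"
  then have "f ^ 1 \<in> ideal_pow A 1"
    using mult_in_ideal_pow_Suc[of f A "1" 0] by simp
  then show "f \<in> int_closure A"
    by (rule in_int_closure_if_power_in_ideal_pow[rotated]) simp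
qed

section \<open>Monomial ideals\<close>

definition monomial :: "'a \<Rightarrow> ('a \<Rightarrow>\<^sub>0 'k::comm_semiring_1)" where
  "monomial m = Poly_Mapping.single m 1"

lemma keys_monomial [simp]: "Poly_Mapping.keys (monomial m :: 'a \<Rightarrow>\<^sub>0 'k::comm_semiring_1) = {m}"
  by (simp add: monomial_def)

lemma monomial_add: "monomial (a + b) = (monomial a * monomial b :: 'a::monoid_add \<Rightarrow>\<^sub>0 'k::comm_semiring_1)"
  by (simp add: monomial_def mult_single)

lemma monomial_power:
  "(monomial a :: 'a::comm_monoid_add \<Rightarrow>\<^sub>0 'k::comm_semiring_1) ^ n = monomial (\<Sum>i<n. a)"
  by (induction n) (simp_all add: monomial_add add.commute, simp add: monomial_def)

lemma monomial_sum_in_ideal_pow: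
  fixes g :: "nat \<Rightarrow> 'a::comm_monoid_add"
  assumes "\<And>j. j < p \<Longrightarrow> (monomial (g j) :: 'a \<Rightarrow>\<^sub>0 'k::comm_ring_1) \<in> A"
  shows "monomial (\<Sum>j<p. g j) \<in> ideal_pow A p"
  using assms
proof (induction p)
  case 0
  then show ?case by simp
next
  case (Suc p)
  then show ?case
    using mult_in_ideal_pow_Suc[of "monomial (g p)" A "monomial (\<Sum>j<p. g j)" p]
    by (simp add: monomial_add add.commute)
qed

lemma in_ideal_pow_if_monomials_in:
  fixes f :: "'a::comm_monoid_add \<Rightarrow>\<^sub>0 'k::comm_ring_1"
  assumes "\<And>m. m \<in> Poly_Mapping.keys f \<Longrightarrow> monomial m \<in> ideal_pow A k"
  shows "f \<in> ideal_pow A k"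
proof -
  have "f = (\<Sum>m\<in>Poly_Mapping.keys f. Poly_Mapping.single 0 (Poly_Mapping.lookup f m) * monomial m)"
    by (rule poly_mapping_eqI)
      (simp add: monomial_def mult_single lookup_sum lookup_single when_def in_keys_iff sum.If_cases)
  also have "\<dots> \<in> ideal_pow A k"
    by (intro ideal_pow_sum ideal_pow_mult_left assms) simp_all
  finally show ?thesis .
qed

definition monomial_span :: "('a \<Rightarrow> bool) \<Rightarrow> ('a \<Rightarrow>\<^sub>0 'k::zero) set" where
  "monomial_span P = {f. \<forall>m\<in>Poly_Mapping.keys f. P m}"

lemma monomial_span_mult:
  fixes f g :: "'a::comm_monoid_add \<Rightarrow>\<^sub>0 'k::comm_semiring_1"
  assumes "\<And>a b. P a \<Longrightarrow> Q b \<Longrightarrow> R (a + b)"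
    and "f \<in> monomial_span P" and "g \<in> monomial_span Q"
  shows "f * g \<in> monomial_span R"
  using keys_mult[of f g] assms unfolding monomial_span_def by blast

lemma gen_ideal_subset_monomial_span:
  fixes G :: "('a::comm_monoid_add \<Rightarrow>\<^sub>0 'k::comm_ring_1) set"
  assumes up: "\<And>m d. P m \<Longrightarrow> P (d + m)" and "G \<subseteq> monomial_span P"
  shows "gen_ideal G \<subseteq> monomial_span P"
proof
  fix x assume "x \<in> gen_ideal G"
  then obtain F r where F: "finite F" "F \<subseteq> G" "x = (\<Sum>g\<in>F. r g * g)"
    unfolding gen_ideal_def by blast
  have "r g * g \<in> monomial_span P" if "g \<in> F" for g
    by (rule monomial_span_mult[of "\<lambda>_. True" P]) (use up assms(2) F that in \<open>auto simp: monomial_span_def\<close>)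
  then show "x \<in> monomial_span P"
    using keys_sum[of "\<lambda>g. r g * g" F] F(3) unfolding monomial_span_def by blast
qed

lemma ideal_pow_subset_monomial_span:
  fixes A :: "('a::comm_monoid_add \<Rightarrow>\<^sub>0 'k::comm_ring_1) set"
  assumes "A \<subseteq> monomial_span P"
    and "\<And>m. Q 0 m"
    and "\<And>k a b. P a \<Longrightarrow> Q k b \<Longrightarrow> Q (Suc k) (a + b)"
    and "\<And>k m d. Q k m \<Longrightarrow> Q k (d + m)"
  shows "ideal_pow A k \<subseteq> monomial_span (Q k)"
proof (induction k)
  case 0
  then show ?case using assms(2) by (simp add: monomial_span_def)
next
  case (Suc k)
  have "{a * b |a b. a \<in> A \<and> b \<in> ideal_pow A k} \<subseteq> monomial_span (Q (Suc k))"
    using monomial_span_mult[of P "Q k" "Q (Suc k)"] assms(1,3) Suc.IH by blast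
  then show ?case
    unfolding ideal_pow.simps ideal_prod_def using assms(4) by (rule gen_ideal_subset_monomial_span[rotated])
qed

section \<open>The weighted order\<close>

lemma lowest_term_mult:
  fixes f g :: "'a::cancel_comm_monoid_add \<Rightarrow>\<^sub>0 'k::comm_semiring_1"
    and \<kappa> :: "'a \<Rightarrow> 'b::{ordered_cancel_comm_monoid_add, linorder}"
  assumes \<kappa>_add: "\<And>a b. \<kappa> (a + b) = \<kappa> a + \<kappa> b" and "inj \<kappa>"
    and f: "\<forall>a\<in>Poly_Mapping.keys f. \<kappa> a0 \<le> \<kappa> a" and g: "\<forall>b\<in>Poly_Mapping.keys g. \<kappa> b0 \<le> \<kappa> b"
  shows "Poly_Mapping.lookup (f * g) (a0 + b0) = Poly_Mapping.lookup f a0 * Poly_Mapping.lookup g b0"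
    and "\<forall>m\<in>Poly_Mapping.keys (f * g). \<kappa> (a0 + b0) \<le> \<kappa> m"
proof -
  have unique: "a = a0"
    if "a \<in> Poly_Mapping.keys f" "b \<in> Poly_Mapping.keys g" "a + b = a0 + b0" for a b
  proof -
    have "\<kappa> a + \<kappa> b = \<kappa> a0 + \<kappa> b0" "\<kappa> a0 \<le> \<kappa> a" "\<kappa> b0 \<le> \<kappa> b"
      using that f g by (metis \<kappa>_add)+
    then have "\<kappa> a = \<kappa> a0"
      by (metis add_mono antisym add_less_le_mono order.order_iff_strict order_less_irrefl)
    then show ?thesis using \<open>inj \<kappa>\<close> by (simp add: inj_eq)
  qed
  have "Poly_Mapping.lookup f l * (\<Sum>q. Poly_Mapping.lookup g q when a0 + b0 = l + q)
      = (Poly_Mapping.lookup f a0 * Poly_Mapping.lookup g b0 when l = a0)" for l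
  proof (cases "l = a0")
    case True
    then show ?thesis by (simp add: eq_commute[of b0])
  next
    case False
    have "(Poly_Mapping.lookup g q when a0 + b0 = l + q) = 0" if "Poly_Mapping.lookup f l \<noteq> 0" for q
      using unique[of l q] that False by (cases "Poly_Mapping.lookup g q = 0") (auto simp: in_keys_iff when_def)
    then show ?thesis using False by (cases "Poly_Mapping.lookup f l = 0") simp_all
  qed
  then show "Poly_Mapping.lookup (f * g) (a0 + b0) = Poly_Mapping.lookup f a0 * Poly_Mapping.lookup g b0"
    by (simp add: lookup_mult)
  show "\<forall>m\<in>Poly_Mapping.keys (f * g). \<kappa> (a0 + b0) \<le> \<kappa> m"
    using keys_mult[of f g] f g by (force simp: \<kappa>_add intro: add_mono)
qed

lemma lowest_term_power:
  fixes f :: "'a::cancel_comm_monoid_add \<Rightarrow>\<^sub>0 'k::comm_semiring_1"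
    and \<kappa> :: "'a \<Rightarrow> 'b::{ordered_cancel_comm_monoid_add, linorder}"
  assumes "\<And>a b. \<kappa> (a + b) = \<kappa> a + \<kappa> b" and "inj \<kappa>"
    and "\<forall>a\<in>Poly_Mapping.keys f. \<kappa> a0 \<le> \<kappa> a"
  shows "Poly_Mapping.lookup (f ^ n) (\<Sum>i<n. a0) = Poly_Mapping.lookup f a0 ^ n
    \<and> (\<forall>m\<in>Poly_Mapping.keys (f ^ n). \<kappa> (\<Sum>i<n. a0) \<le> \<kappa> m)"
proof (induction n)
  case 0
  then show ?case by simp
next
  case (Suc n)
  then show ?case
    using lowest_term_mult[OF assms, of "f ^ n" "\<Sum>i<n. a0"] by (simp add: add.commute)
qed

lemma dotw_lookup_add:
  "dotw w (Poly_Mapping.lookup (a + b)) = dotw w (Poly_Mapping.lookup a) + dotw w (Poly_Mapping.lookup b)"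
  by (simp add: dotw_def lookup_add distrib_left sum.distrib)

lemma dotw_lookup_single: "dotw w (Poly_Mapping.lookup (Poly_Mapping.single v e)) = w v * e"
proof -
  have "(\<Sum>u\<in>UNIV. w u * (e when v = u)) = (\<Sum>u\<in>UNIV. if u = v then w v * e else 0)"
    by (rule sum.cong) (auto simp: when_def)
  then show ?thesis
    by (simp add: dotw_def lookup_single)
qed

lemma dotw_lookup_sum_const:
  "dotw w (Poly_Mapping.lookup (\<Sum>i<n. a)) = n * dotw w (Poly_Mapping.lookup a)"
  by (induction n) (simp_all add: dotw_lookup_add, simp add: dotw_def)

text \<open>A monomial order refining the weighted degree: \<open>nat \<Rightarrow>\<^sub>0 nat\<close> is ordered
  lexicographically, so keys compare first by weight (index 0), then by the exponents enumerated by
  the injection \<open>idx\<close>.\<close>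
definition weighted_key :: "('v::finite \<Rightarrow> nat) \<Rightarrow> ('v \<Rightarrow> nat) \<Rightarrow> ('v \<Rightarrow>\<^sub>0 nat) \<Rightarrow> (nat \<Rightarrow>\<^sub>0 nat)" where
  "weighted_key w idx m = Poly_Mapping.single 0 (dotw w (Poly_Mapping.lookup m))
     + (\<Sum>v\<in>UNIV. Poly_Mapping.single (Suc (idx v)) (Poly_Mapping.lookup m v))"

lemma weighted_key_add: "weighted_key w idx (a + b) = weighted_key w idx a + weighted_key w idx b"
  by (simp add: weighted_key_def dotw_lookup_add single_add lookup_add sum.distrib add_ac)

lemma inj_weighted_key:
  assumes "inj idx"
  shows "inj (weighted_key w idx)"
proof (rule injI)
  fix a b assume eq: "weighted_key w idx a = weighted_key w idx b"
  have "Poly_Mapping.lookup (weighted_key w idx m) (Suc (idx v)) = Poly_Mapping.lookup m v" for m v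
    by (simp add: weighted_key_def lookup_add lookup_sum lookup_single when_def inj_eq[OF assms])
  then show "a = b"
    using eq by (metis poly_mapping_eqI)
qed

lemma weighted_key_le_imp_dotw_le:
  assumes "weighted_key w idx a \<le> weighted_key w idx b"
  shows "dotw w (Poly_Mapping.lookup a) \<le> dotw w (Poly_Mapping.lookup b)"
proof -
  have "Poly_Mapping.lookup p 0 \<le> Poly_Mapping.lookup q 0" if "p \<le> q" for p q :: "nat \<Rightarrow>\<^sub>0 nat"
    using that unfolding less_eq_poly_mapping.rep_eq less_fun_def
    by (metis bot_nat_0.not_eq_extremum less_or_eq_imp_le order_refl)
  from this[OF assms] show ?thesis
    by (simp add: weighted_key_def lookup_add lookup_sum lookup_single)
qed

abbreviation weight_ideal :: "('v::finite \<Rightarrow> nat) \<Rightarrow> nat \<Rightarrow> ('v, 'k::zero) mpoly set" where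
  "weight_ideal w c \<equiv> monomial_span (\<lambda>m. c \<le> dotw w (Poly_Mapping.lookup m))"

lemma lookup_eq_0_if_dotw_less:
  assumes "f \<in> weight_ideal w c" and "dotw w (Poly_Mapping.lookup m) < c"
  shows "Poly_Mapping.lookup f m = 0"
proof (rule ccontr)
  assume "Poly_Mapping.lookup f m \<noteq> 0"
  then have "m \<in> Poly_Mapping.keys f" by (simp add: in_keys_iff)
  with assms show False by (auto simp: monomial_span_def)
qed

lemma ideal_pow_subset_weight_ideal:
  fixes A :: "('v::finite, 'k::comm_ring_1) mpoly set"
  assumes "A \<subseteq> weight_ideal w c"
  shows "ideal_pow A k \<subseteq> weight_ideal w (k * c)"
  by (rule ideal_pow_subset_monomial_span[OF assms]) (auto simp: dotw_lookup_add)

lemma weight_ideal_power: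
  fixes f :: "('v::finite, 'k::comm_semiring_1) mpoly"
  shows "f \<in> weight_ideal w c \<Longrightarrow> f ^ n \<in> weight_ideal w (n * c)"
proof (induction n)
  case 0
  then show ?case by (simp add: monomial_span_def)
next
  case (Suc n)
  have "f * f ^ n \<in> weight_ideal w (c + n * c)"
    by (rule monomial_span_mult[OF _ Suc.prems Suc.IH[OF Suc.prems]]) (simp add: dotw_lookup_add add_mono)
  then show ?case by simp
qed

lemma lowest_weight_exponent:
  fixes f :: "('v::finite, 'k::idom) mpoly"
  assumes "f \<noteq> 0"
  obtains m where "f \<in> weight_ideal w (dotw w (Poly_Mapping.lookup m))"
    and "\<And>n. Poly_Mapping.lookup (f ^ n) (\<Sum>i<n. m) \<noteq> 0"
proof -
  obtain idx :: "'v \<Rightarrow> nat" where "inj idx"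
    using finite_imp_inj_to_nat_seg[of "UNIV :: 'v set"] by auto
  let ?\<kappa> = "weighted_key w idx"
  have "finite (Poly_Mapping.keys f)" "Poly_Mapping.keys f \<noteq> {}"
    using assms by auto
  then obtain m where m: "m \<in> Poly_Mapping.keys f" and min: "\<forall>a\<in>Poly_Mapping.keys f. ?\<kappa> m \<le> ?\<kappa> a"
    using ex_is_arg_min_if_finite[of "Poly_Mapping.keys f" ?\<kappa>] by (auto simp: is_arg_min_def not_less)
  show ?thesis
  proof
    show "f \<in> weight_ideal w (dotw w (Poly_Mapping.lookup m))"
      using min weighted_key_le_imp_dotw_le unfolding monomial_span_def by blast
    show "Poly_Mapping.lookup (f ^ n) (\<Sum>i<n. m) \<noteq> 0" for n
      using lowest_term_power[OF weighted_key_add inj_weighted_key[OF \<open>inj idx\<close>] min] m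
      by (simp add: in_keys_iff)
  qed
qed

lemma int_closure_subset_weight_ideal:
  fixes A :: "('v::finite, 'k::idom) mpoly set"
  assumes "A \<subseteq> weight_ideal w c"
  shows "int_closure A \<subseteq> weight_ideal w c"
proof
  fix f assume "f \<in> int_closure A"
  then obtain k a where a: "\<forall>i\<in>{1..k}. a i \<in> ideal_pow A i"
    and eq: "f ^ k + (\<Sum>i=1..k. a i * f ^ (k - i)) = 0"
    unfolding int_closure_def by blast
  show "f \<in> weight_ideal w c"
  proof (rule ccontr)
    assume not_in: "f \<notin> weight_ideal w c"
    then have "f \<noteq> 0" by (auto simp: monomial_span_def)
    then obtain m where low: "f \<in> weight_ideal w (dotw w (Poly_Mapping.lookup m))"
      and nz: "Poly_Mapping.lookup (f ^ k) (\<Sum>j<k. m) \<noteq> 0"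
      using lowest_weight_exponent[of f w] by blast
    define d where "d = dotw w (Poly_Mapping.lookup m)"
    have "d < c"
      using not_in low unfolding monomial_span_def d_def by force
    txt \<open>The coefficient of \<open>x^(k m)\<close> comes from \<open>f^k\<close> alone: every other summand has weighted
      order at least \<open>i c + (k - i) d > k d\<close>.\<close>
    have "Poly_Mapping.lookup (a i * f ^ (k - i)) (\<Sum>j<k. m) = 0" if i: "i \<in> {1..k}" for i
    proof (rule lookup_eq_0_if_dotw_less)
      have ai: "a i \<in> weight_ideal w (i * c)"
        using ideal_pow_subset_weight_ideal[OF assms, of i] a i by blast
      show "a i * f ^ (k - i) \<in> weight_ideal w (i * c + (k - i) * d)"
        by (rule monomial_span_mult[OF _ ai weight_ideal_power[OF low[folded d_def]]])
          (simp add: dotw_lookup_add add_mono)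
      have "k * d = i * d + (k - i) * d"
        using i by (simp flip: add_mult_distrib)
      moreover have "i * d < i * c"
        using i \<open>d < c\<close> by simp
      ultimately show "dotw w (Poly_Mapping.lookup (\<Sum>j<k. m)) < i * c + (k - i) * d"
        by (simp add: dotw_lookup_sum_const d_def)
    qed
    then have "Poly_Mapping.lookup (f ^ k + (\<Sum>i=1..k. a i * f ^ (k - i))) (\<Sum>j<k. m) \<noteq> 0"
      using nz by (simp add: lookup_add lookup_sum)
    then show False using eq by simp
  qed
qed

section \<open>Pure powers and the ideals \<open>J(\<lambda>)\<close> and \<open>I(\<lambda>)\<close>\<close>

lemma lcm_lam_pos: "\<forall>v. lam v > 0 \<Longrightarrow> lcm_lam lam > 0"
  unfolding lcm_lam_def by (auto simp: Lcm_0_iff intro!: Nat.gr0I) (metis less_irrefl)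

lemma omega_mult_lam: "omega lam v * lam v = lcm_lam lam"
  unfolding omega_def lcm_lam_def by (simp add: dvd_Lcm)

lemma var_pow_eq_monomial: "var_pow v e = monomial (Poly_Mapping.single v e)"
  by (simp add: var_pow_def monomial_def)

definition pure_power_count :: "('v::finite \<Rightarrow> nat) \<Rightarrow> ('v \<Rightarrow>\<^sub>0 nat) \<Rightarrow> nat" where
  "pure_power_count lam m = (\<Sum>v\<in>UNIV. Poly_Mapping.lookup m v div lam v)"

lemma pure_power_count_add_pure_power:
  assumes "lam v > 0"
  shows "pure_power_count lam (Poly_Mapping.single v (lam v) + m) = Suc (pure_power_count lam m)"
proof -
  have "Poly_Mapping.lookup (Poly_Mapping.single v (lam v) + m) u div lam u
      = Poly_Mapping.lookup m u div lam u + (if u = v then 1 else 0)" for u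
    using assms by (simp add: lookup_add lookup_single when_def div_add_self1)
  then show ?thesis
    by (simp add: pure_power_count_def sum.distrib)
qed

lemma pure_power_count_scaled:
  assumes "\<forall>v. lam v > 0"
  shows "pure_power_count lam (\<Sum>i<lcm_lam lam. m) = dotw (omega lam) (Poly_Mapping.lookup m)"
proof -
  have "lcm_lam lam * Poly_Mapping.lookup m v div lam v = omega lam v * Poly_Mapping.lookup m v" for v
  proof -
    have "lcm_lam lam * Poly_Mapping.lookup m v = omega lam v * Poly_Mapping.lookup m v * lam v"
      by (simp add: omega_mult_lam[of lam v, symmetric] mult_ac)
    then show ?thesis using assms by (simp only: nonzero_mult_div_cancel_right neq0_conv)
  qed
  then show ?thesis
    by (simp add: pure_power_count_def dotw_def lookup_sum)
qed

lemma monomial_split_ideal_pow: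
  fixes A :: "('v::finite, 'k::comm_ring_1) mpoly set"
  assumes pos: "\<forall>v. lam v > 0" and pure: "\<And>v. var_pow v (lam v) \<in> A"
  shows "pure_power_count lam m \<ge> p + r
    \<Longrightarrow> \<exists>m1 m2. m = m1 + m2 \<and> monomial m1 \<in> ideal_pow A p \<and> pure_power_count lam m2 \<ge> r"
proof (induction p arbitrary: m)
  case 0
  then show ?case by (intro exI[of _ 0] exI[of _ m]) simp
next
  case (Suc p)
  obtain v where v: "lam v \<le> Poly_Mapping.lookup m v"
  proof (rule ccontr)
    assume "\<not> thesis"
    then have "Poly_Mapping.lookup m u < lam u" for u
      using that not_le by blast
    then have "pure_power_count lam m = 0"
      by (simp add: pure_power_count_def)
    with Suc.prems show False by simp
  qed
  define m' where "m' = m - Poly_Mapping.single v (lam v)"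
  have m: "m = Poly_Mapping.single v (lam v) + m'"
    by (rule poly_mapping_eqI) (use v in \<open>auto simp: m'_def lookup_add lookup_minus lookup_single when_def\<close>)
  then have "pure_power_count lam m' \<ge> p + r"
    using Suc.prems pure_power_count_add_pure_power[of lam v m'] pos by simp
  then obtain m1 m2 where m': "m' = m1 + m2" "monomial m1 \<in> ideal_pow A p" "pure_power_count lam m2 \<ge> r"
    using Suc.IH by blast
  have "monomial (Poly_Mapping.single v (lam v) + m1) \<in> ideal_pow A (Suc p)"
    using mult_in_ideal_pow_Suc[OF pure[of v, unfolded var_pow_eq_monomial] m'(2)]
    by (simp add: monomial_add)
  then show ?case
    using m m' by (intro exI[of _ "Poly_Mapping.single v (lam v) + m1"] exI[of _ m2]) (simp add: add.assoc)
qed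

lemma monomial_in_ideal_pow:
  fixes A :: "('v::finite, 'k::comm_ring_1) mpoly set"
  assumes "\<forall>v. lam v > 0" and "\<And>v. var_pow v (lam v) \<in> A" and "pure_power_count lam m \<ge> p"
  shows "monomial m \<in> ideal_pow A p"
proof -
  obtain m1 m2 where "m = m1 + m2" "monomial m1 \<in> ideal_pow A p"
    using monomial_split_ideal_pow[OF assms(1,2), where m = m and p = p and r = 0] assms(3) by auto
  then show ?thesis
    using ideal_pow_mult_left[of "monomial m1" A p "monomial m2"] by (simp add: monomial_add mult.commute)
qed

lemma monomial_in_ideal_pow_ideal_pow:
  fixes A :: "('v::finite, 'k::comm_ring_1) mpoly set"
  assumes pos: "\<forall>v. lam v > 0" and pure: "\<And>v. var_pow v (lam v) \<in> A"
  shows "pure_power_count lam m \<ge> p * k \<Longrightarrow> monomial m \<in> ideal_pow (ideal_pow A p) k"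
proof (induction k arbitrary: m)
  case 0
  then show ?case by simp
next
  case (Suc k)
  then obtain m1 m2 where m: "m = m1 + m2" "monomial m1 \<in> ideal_pow A p" "pure_power_count lam m2 \<ge> p * k"
    using monomial_split_ideal_pow[OF pos pure, where m = m and p = p and r = "p * k"] by auto
  then show ?case
    using mult_in_ideal_pow_Suc[OF m(2) Suc.IH[OF m(3)]] by (simp add: monomial_add)
qed

lemma var_pow_in_J_lam: "var_pow v (lam v) \<in> J_lam lam"
  unfolding J_lam_def by (rule gen_ideal_base) simp

lemma var_pow_in_I_lam: "var_pow v (lam v) \<in> I_lam lam"
  using var_pow_in_J_lam subset_int_closure unfolding I_lam_def by blast

lemma I_lam_subset_weight_ideal: "I_lam lam \<subseteq> weight_ideal (omega lam) (lcm_lam lam)"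
proof -
  have "J_lam lam \<subseteq> weight_ideal (omega lam) (lcm_lam lam)"
    unfolding J_lam_def
    by (rule gen_ideal_subset_monomial_span)
      (auto simp: dotw_lookup_add var_pow_eq_monomial monomial_span_def dotw_lookup_single omega_mult_lam)
  then show ?thesis
    unfolding I_lam_def by (rule int_closure_subset_weight_ideal)
qed

lemma monomial_in_I_lam:
  assumes pos: "\<forall>v. lam v > 0" and "Poly_Mapping.lookup m \<in> Gamma lam"
  shows "(monomial m :: ('v::finite, 'k::field) mpoly) \<in> I_lam lam"
proof -
  have "pure_power_count lam (\<Sum>i<lcm_lam lam. m) \<ge> lcm_lam lam"
    using assms by (simp add: pure_power_count_scaled Gamma_def)
  then have "(monomial m :: ('v, 'k) mpoly) ^ lcm_lam lam \<in> ideal_pow (J_lam lam) (lcm_lam lam)"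
    unfolding monomial_power by (rule monomial_in_ideal_pow[OF pos var_pow_in_J_lam])
  then show ?thesis
    unfolding I_lam_def using lcm_lam_pos[OF pos]
    by (intro in_int_closure_if_power_in_ideal_pow) simp_all
qed

section \<open>Decompositions into elements of \<open>\<Gamma>\<close>\<close>

lemma Gamma_mono:
  assumes "a \<in> Gamma lam" and "a \<le> b"
  shows "b \<in> Gamma lam"
proof -
  have "dotw (omega lam) a \<le> dotw (omega lam) b"
    unfolding dotw_def using assms(2) by (intro sum_mono) (simp add: le_fun_def)
  then show ?thesis
    using assms(1) by (simp add: Gamma_def)
qed

lemma decomposable_1_iff: "decomposable lam a 1 \<longleftrightarrow> a \<in> Gamma lam"
  unfolding decomposable_def by auto

lemma decomposable_Suc:
  assumes "a \<in> Gamma lam" and "decomposable lam b q"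
  shows "decomposable lam (\<lambda>v. a v + b v) (Suc q)"
proof -
  from assms(2) obtain \<beta> where \<beta>: "\<forall>j<q. \<beta> j \<in> Gamma lam" "b = (\<lambda>v. \<Sum>j<q. \<beta> j v)"
    unfolding decomposable_def by blast
  define \<beta>' where "\<beta>' j = (if j < q then \<beta> j else a)" for j
  have "\<forall>j<Suc q. \<beta>' j \<in> Gamma lam" and "(\<lambda>v. a v + b v) = (\<lambda>v. \<Sum>j<Suc q. \<beta>' j v)"
    using \<beta> assms(1) by (auto simp: \<beta>'_def)
  then show ?thesis
    unfolding decomposable_def by blast
qed

lemma decomposable_mono:
  assumes "decomposable lam a (Suc q)"
  shows "decomposable lam (\<lambda>v. d v + a v) (Suc q)"
proof -
  from assms obtain \<beta> where \<beta>: "\<forall>j<Suc q. \<beta> j \<in> Gamma lam" "a = (\<lambda>v. \<Sum>j<Suc q. \<beta> j v)"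
    unfolding decomposable_def by blast
  define \<beta>' where "\<beta>' j = (if j = 0 then (\<lambda>v. d v + \<beta> 0 v) else \<beta> j)" for j
  have "\<forall>j<Suc q. \<beta>' j \<in> Gamma lam"
    using \<beta>(1) by (auto simp: \<beta>'_def le_fun_def intro: Gamma_mono)
  moreover have "(\<lambda>v. d v + a v) = (\<lambda>v. \<Sum>j<Suc q. \<beta>' j v)"
    using \<beta>(2) unfolding sum.lessThan_Suc_shift by (simp add: \<beta>'_def add.assoc)
  ultimately show ?thesis
    unfolding decomposable_def by blast
qed

lemma I_lam_pow_subset_decomposable:
  "ideal_pow (I_lam lam :: ('v::finite, 'k::field) mpoly set) p
     \<subseteq> monomial_span (\<lambda>m. p = 0 \<or> decomposable lam (Poly_Mapping.lookup m) p)"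
proof (rule ideal_pow_subset_monomial_span[OF I_lam_subset_weight_ideal])
  fix k a b
  assume "lcm_lam lam \<le> dotw (omega lam) (Poly_Mapping.lookup a)"
    and b: "k = 0 \<or> decomposable lam (Poly_Mapping.lookup b) k"
  then have a: "Poly_Mapping.lookup a \<in> Gamma lam"
    by (simp add: Gamma_def)
  show "Suc k = 0 \<or> decomposable lam (Poly_Mapping.lookup (a + b)) (Suc k)"
  proof (cases "k = 0")
    case True
    then show ?thesis
      using Gamma_mono[OF a, of "Poly_Mapping.lookup (a + b)"] decomposable_1_iff[of lam]
      by (simp add: plus_poly_mapping.rep_eq le_fun_def)
  next
    case False
    then show ?thesis
      using decomposable_Suc[OF a] b by (simp add: plus_poly_mapping.rep_eq)
  qed
next
  fix k m d
  assume "k = 0 \<or> decomposable lam (Poly_Mapping.lookup m) k"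
  then show "k = 0 \<or> decomposable lam (Poly_Mapping.lookup (d + m)) k"
    using decomposable_mono by (cases k) (auto simp: plus_poly_mapping.rep_eq)
qed simp

lemma monomial_in_I_lam_pow_if_decomposable:
  assumes pos: "\<forall>v. lam v > 0" and "decomposable lam (Poly_Mapping.lookup m) p"
  shows "(monomial m :: ('v::finite, 'k::field) mpoly) \<in> ideal_pow (I_lam lam) p"
proof -
  from assms(2) obtain \<beta> where \<beta>: "\<forall>j<p. \<beta> j \<in> Gamma lam" "Poly_Mapping.lookup m = (\<lambda>v. \<Sum>j<p. \<beta> j v)"
    unfolding decomposable_def by blast
  have "m = (\<Sum>j<p. Abs_poly_mapping (\<beta> j))"
    by (rule poly_mapping_eqI) (simp add: \<beta>(2) lookup_sum)
  moreover have "(monomial (\<Sum>j<p. Abs_poly_mapping (\<beta> j)) :: ('v, 'k) mpoly) \<in> ideal_pow (I_lam lam) p"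
    using \<beta>(1) by (intro monomial_sum_in_ideal_pow monomial_in_I_lam[OF pos]) simp
  ultimately show ?thesis by simp
qed

lemma decomposable_if_normal:
  fixes lam :: "'v::finite \<Rightarrow> nat"
  assumes pos: "\<forall>v. lam v > 0" and normal: "normal_ideal (I_lam lam :: ('v, 'k::field) mpoly set)"
    and "p \<ge> 1" and "dotw (omega lam) a \<ge> p * lcm_lam lam"
  shows "decomposable lam a p"
proof -
  define m where "m = Abs_poly_mapping a"
  have a: "Poly_Mapping.lookup m = a"
    by (simp add: m_def)
  have "pure_power_count lam (\<Sum>i<lcm_lam lam. m) \<ge> p * lcm_lam lam"
    using assms(4) by (simp add: pure_power_count_scaled[OF pos] a)
  then have "(monomial m :: ('v, 'k) mpoly) ^ lcm_lam lam \<in> ideal_pow (ideal_pow (I_lam lam) p) (lcm_lam lam)"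
    unfolding monomial_power by (rule monomial_in_ideal_pow_ideal_pow[OF pos var_pow_in_I_lam])
  then have "(monomial m :: ('v, 'k) mpoly) \<in> int_closure (ideal_pow (I_lam lam) p)"
    using lcm_lam_pos[OF pos] by (intro in_int_closure_if_power_in_ideal_pow) simp_all
  then have "(monomial m :: ('v, 'k) mpoly) \<in> ideal_pow (I_lam lam) p"
    using normal \<open>p \<ge> 1\<close> unfolding normal_ideal_def by blast
  then show ?thesis
    using I_lam_pow_subset_decomposable \<open>p \<ge> 1\<close> by (force simp: monomial_span_def a)
qed

lemma normal_if_decomposable:
  fixes lam :: "'v::finite \<Rightarrow> nat"
  assumes pos: "\<forall>v. lam v > 0"
    and dec: "\<And>a p. p \<ge> 1 \<Longrightarrow> dotw (omega lam) a \<ge> p * lcm_lam lam \<Longrightarrow> decomposable lam a p"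
  shows "normal_ideal (I_lam lam :: ('v, 'k::field) mpoly set)"
  unfolding normal_ideal_def
proof (intro allI impI equalityI subset_int_closure subsetI)
  fix p :: nat and f :: "('v, 'k) mpoly"
  assume "p \<ge> 1" and "f \<in> int_closure (ideal_pow (I_lam lam) p)"
  then have f: "f \<in> weight_ideal (omega lam) (p * lcm_lam lam)"
    using int_closure_subset_weight_ideal[OF ideal_pow_subset_weight_ideal[OF I_lam_subset_weight_ideal]]
    by blast
  show "f \<in> ideal_pow (I_lam lam) p"
  proof (rule in_ideal_pow_if_monomials_in)
    fix m assume "m \<in> Poly_Mapping.keys f"
    then have "dotw (omega lam) (Poly_Mapping.lookup m) \<ge> p * lcm_lam lam"
      using f by (simp add: monomial_span_def)
    then show "monomial m \<in> ideal_pow (I_lam lam) p"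
      by (rule monomial_in_I_lam_pow_if_decomposable[OF pos dec[OF \<open>p \<ge> 1\<close>]])
  qed
qed

lemma dotw_omega_less_if_below_lam:
  fixes lam :: "'v::finite \<Rightarrow> nat"
  assumes "\<forall>v. lam v > 0" and "\<forall>v. a v < lam v"
  shows "dotw (omega lam) a < card (UNIV :: 'v set) * lcm_lam lam"
proof -
  have "omega lam v * a v < lcm_lam lam" for v
    using assms omega_mult_lam[of lam v] lcm_lam_pos[OF assms(1)]
    by (metis mult_less_cancel1 neq0_conv mult_0)
  then have "dotw (omega lam) a < (\<Sum>v\<in>(UNIV :: 'v set). lcm_lam lam)"
    unfolding dotw_def by (intro sum_strict_mono) simp_all
  then show ?thesis by simp
qed

lemma decomposable_if_decomposable_below_lam:
  fixes lam :: "'v::finite \<Rightarrow> nat"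
  assumes pos: "\<forall>v. lam v > 0"
    and small: "\<And>a p. \<forall>v. a v < lam v \<Longrightarrow> 1 \<le> p \<Longrightarrow> p < card (UNIV :: 'v set)
      \<Longrightarrow> dotw (omega lam) a \<ge> p * lcm_lam lam \<Longrightarrow> decomposable lam a p"
  shows "p \<ge> 1 \<Longrightarrow> dotw (omega lam) a \<ge> p * lcm_lam lam \<Longrightarrow> decomposable lam a p"
proof (induction p arbitrary: a)
  case 0
  then show ?case by simp
next
  case (Suc p)
  show ?case
  proof (cases "\<forall>v. a v < lam v")
    case True
    then have "Suc p * lcm_lam lam < card (UNIV :: 'v set) * lcm_lam lam"
      using dotw_omega_less_if_below_lam[OF pos] Suc.prems(2) by (meson le_less_trans)
    then have "Suc p < card (UNIV :: 'v set)"
      by (rule mult_less_cancel2[THEN iffD1, THEN conjunct2])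
    then show ?thesis
      using small True Suc.prems by blast
  next
    case False
    then obtain v where v: "lam v \<le> a v"
      by (auto simp: not_less)
    define e where "e u = (if u = v then lam v else 0)" for u
    define a' where "a' u = a u - e u" for u
    have a: "a = (\<lambda>u. e u + a' u)"
      using v by (auto simp: a'_def e_def)
    have e: "dotw (omega lam) e = lcm_lam lam"
      unfolding dotw_def e_def by (simp add: if_distrib omega_mult_lam cong: if_cong)
    have "dotw (omega lam) a = dotw (omega lam) e + dotw (omega lam) a'"
      unfolding dotw_def by (subst a) (simp add: distrib_left sum.distrib)
    then have a': "dotw (omega lam) a' \<ge> p * lcm_lam lam"
      using Suc.prems(2) e by simp
    have "e \<in> Gamma lam"
      using e by (simp add: Gamma_def)
    show ?thesis
    proof (cases "p = 0")
      case True
      then show ?thesis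
        using Suc.prems(2) by (simp add: decomposable_1_iff[simplified] Gamma_def)
    next
      case False
      then show ?thesis
        using decomposable_Suc[OF \<open>e \<in> Gamma lam\<close> Suc.IH[OF _ a']] a by simp
    qed
  qed
qed

theorem lemma4p3:
  fixes lam :: "'v::finite \<Rightarrow> nat"
  assumes pos: "\<forall>v. lam v > 0"
  shows "(normal_ideal (I_lam lam :: ('v, 'k::field) mpoly set) \<longleftrightarrow>
           (\<forall>a p. p \<ge> 1 \<and> dotw (omega lam) a \<ge> p * lcm_lam lam \<longrightarrow> decomposable lam a p))
       \<and> ((\<forall>a p. p \<ge> 1 \<and> dotw (omega lam) a \<ge> p * lcm_lam lam \<longrightarrow> decomposable lam a p) \<longleftrightarrow>
           (\<forall>a p. (\<forall>v. a v < lam v) \<and> 1 \<le> p \<and> p < card (UNIV :: 'v set) \<and> dotw (omega lam) a \<ge> p * lcm_lam lam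
                 \<longrightarrow> decomposable lam a p))"
  using decomposable_if_normal[OF pos] normal_if_decomposable[OF pos]
    decomposable_if_decomposable_below_lam[OF pos]
  by blast

end
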